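(* Let $V$ be a neighborhood of $0$ in $\mathbb{C}$. Let $h$ be meromorphic in $V$, let $B$ be holomorphic and zero-free in $V\setminus\{0\}$ with $|B(z)|=1$ for all $z\in (V\cap\mathbb{R})\setminus\{0\}$, and let $\phi$ be a univalent holomorphic function on $\{z\in V:\operatorname{Im} z>0\}$ satisfying $\phi'=Bh$ there. Then the singularity of $B$ at $0$ is removable. *)

theory Defs
  imports "HOL-Complex_Analysis.Complex_Analysis"
begin

end

theory Submission
  imports Defs
begin

text \<open>
  Near 0 write \<open>h z = g z * z powi n\<close> with \<open>g\<close> holomorphic and zero-free; \<open>h\<close> cannot vanish
  identically near 0 because the derivative of the univalent \<open>\<phi>\<close> never vanishes. In the upper
  half-plane \<open>B'/B = \<phi>''/\<phi>' - g'/g - n/z\<close>, and the distortion estimate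
  \<open>|\<phi>''(z)/\<phi>'(z)| \<le> C / d\<close> for functions univalent on a disc of radius \<open>d\<close> around \<open>z\<close>
  gives \<open>|B'/B| \<le> C / Im z + K / |z|\<close>. Since \<open>|B| = 1\<close> on the real axis, reflection yields
  \<open>B z * cnj (B (cnj z)) = 1\<close>, so the same bound holds in the lower half-plane. A Cauchy integral
  over circles centred on the real axis, against a kernel vanishing on the real axis, improves it to
  \<open>|B'/B| \<le> K' / |z|\<close>. Integrating \<open>B'/B\<close> along circular arcs that start on the real axis,
  where \<open>ln |B| = 0\<close>, bounds \<open>|ln |B||\<close>; hence \<open>B\<close> is bounded near 0 and its singularity is
  removable.
\<close>

section \<open>Distortion of univalent functions\<close>

text \<open>
  If the image contained the closed disc of radius 2, the inverse of \<open>f\<close> would map that disc into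
  the unit disc, and Cauchy's inequality on the circle of radius \<open>3/2\<close> would bound its derivative at 0
  by \<open>2/3\<close>, although it is 1.
\<close>

lemma normalized_univalent_omits_value:
  fixes f :: "complex \<Rightarrow> complex"
  assumes holf: "f holomorphic_on ball 0 1" and inj: "inj_on f (ball 0 1)"
    and f0: "f 0 = 0" and df0: "deriv f 0 = 1"
  obtains w where "w \<notin> f ` ball 0 1" "norm w \<le> 2"
proof -
  have False if sub: "cball 0 2 \<subseteq> f ` ball 0 1"
  proof -
    obtain g where g: "g holomorphic_on f ` ball 0 1"
      "\<And>z. z \<in> ball 0 1 \<Longrightarrow> deriv f z * deriv g (f z) = 1"
      "\<And>z. z \<in> ball 0 1 \<Longrightarrow> g (f z) = z"
      using holomorphic_has_inverse[OF holf open_ball inj] by blast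
    have "g holomorphic_on ball 0 2"
      using g(1) sub by (meson ball_subset_cball holomorphic_on_subset order_trans)
    then have holg: "g holomorphic_on ball 0 (3/2)"
      by (rule holomorphic_on_subset) auto
    have "norm ((deriv ^^ 1) g 0) \<le> fact 1 * 1 / (3/2)^1"
    proof (rule Cauchy_inequality[OF holg])
      show "continuous_on (cball 0 (3/2)) g"
        using \<open>g holomorphic_on ball 0 2\<close>
        by (intro holomorphic_on_imp_continuous_on) (rule holomorphic_on_subset, auto)
      fix x :: complex assume "norm (0 - x) = 3/2"
      then have "x \<in> f ` ball 0 1" using sub by auto
      then obtain z where "z \<in> ball 0 1" "x = f z" by blast
      then show "norm (g x) \<le> 1" using g(3) by auto
    qed auto
    moreover have "deriv g 0 = 1" using g(2)[of 0] f0 df0 by simp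
    ultimately show False by simp
  qed
  then show thesis using that by (meson mem_cball_0 subsetI)
qed

text \<open>
  The branch with \<open>G 0 = 1\<close> omits \<open>-1\<close>: \<open>G u ^ 2 = 1\<close> forces \<open>f u = 0 = f 0\<close>, i.e. \<open>u = 0\<close>.
\<close>

lemma normalized_univalent_sqrt:
  fixes f :: "complex \<Rightarrow> complex"
  assumes holf: "f holomorphic_on ball 0 1" and inj: "inj_on f (ball 0 1)"
    and f0: "f 0 = 0" and w0: "w0 \<notin> f ` ball 0 1"
  obtains G where "G holomorphic_on ball 0 1" "G 0 = 1"
    "\<And>u. u \<in> ball 0 1 \<Longrightarrow> f u = w0 * (1 - G u ^ 2)"
    "\<And>u. u \<in> ball 0 1 \<Longrightarrow> G u \<noteq> 0 \<and> G u \<noteq> -1"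
proof -
  have w0nz: "w0 \<noteq> 0" using w0 f0 by force
  define Q where "Q = (\<lambda>u. 1 - f u / w0)"
  have Qhol: "Q holomorphic_on ball 0 1"
    unfolding Q_def using w0nz by (intro holomorphic_intros holf) auto
  have fQ: "f u = w0 * (1 - Q u)" for u
    using w0nz by (simp add: Q_def field_simps)
  have Qnz: "Q u \<noteq> 0" if "u \<in> ball 0 1" for u
    using w0 that fQ[of u] by force
  obtain G0 where G0: "G0 holomorphic_on ball 0 1" "\<And>u. u \<in> ball 0 1 \<Longrightarrow> Q u = G0 u ^ 2"
    using contractible_imp_holomorphic_sqrt[OF Qhol convex_imp_contractible[OF convex_ball] Qnz] by blast
  have G00: "G0 0 ^ 2 = 1" using G0(2)[of 0] by (simp add: Q_def f0)
  define G where "G = (\<lambda>u. G0 0 * G0 u)"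
  have GQ: "Q u = G u ^ 2" if "u \<in> ball 0 1" for u
    using G0(2)[OF that] G00 by (simp add: G_def power_mult_distrib)
  have G0one: "G 0 = 1" using G00 by (simp add: G_def power2_eq_square)
  show thesis
  proof
    show "G holomorphic_on ball 0 1" unfolding G_def by (intro holomorphic_intros G0)
    show "G 0 = 1" by (fact G0one)
    show "f u = w0 * (1 - G u ^ 2)" if "u \<in> ball 0 1" for u
      using fQ GQ[OF that] by simp
    show "G u \<noteq> 0 \<and> G u \<noteq> -1" if u: "u \<in> ball 0 1" for u
    proof
      show "G u \<noteq> 0" using GQ[OF u] Qnz[OF u] by auto
      show "G u \<noteq> -1"
      proof
        assume "G u = -1"
        then have "f u = f 0" using fQ GQ[OF u] f0 by simp
        then have "u = 0" using inj_onD[OF inj] u by auto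
        then show False using \<open>G u = -1\<close> G0one by simp
      qed
    qed
  qed
qed

text \<open>
  Only the existence of some constant matters. This one comes from Schottky's theorem; the sharp
  bound on \<open>norm (deriv (deriv f) 0)\<close>, by Bieberbach's theorem, is \<open>4\<close>.
\<close>

definition univalent_distortion_const :: real where
  "univalent_distortion_const = 16 * (1 + exp (pi * exp (28 * pi)) ^ 2)"

text \<open>Schottky's theorem applies to \<open>-G\<close>, which omits 0 and 1.\<close>

lemma normalized_univalent_bounded_half_disc:
  fixes f :: "complex \<Rightarrow> complex"
  assumes holf: "f holomorphic_on ball 0 1" and inj: "inj_on f (ball 0 1)"
    and f0: "f 0 = 0" and df0: "deriv f 0 = 1" and v: "norm v \<le> 1/2"
  shows "norm (f v) \<le> univalent_distortion_const / 8"
proof -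
  define S where "S = exp (pi * exp (28 * pi))"
  obtain w0 where w0: "w0 \<notin> f ` ball 0 1" "norm w0 \<le> 2"
    using normalized_univalent_omits_value[OF holf inj f0 df0] by blast
  obtain G where G: "G holomorphic_on ball 0 1" "G 0 = 1"
    "\<And>u. u \<in> ball 0 1 \<Longrightarrow> f u = w0 * (1 - G u ^ 2)"
    "\<And>u. u \<in> ball 0 1 \<Longrightarrow> G u \<noteq> 0 \<and> G u \<noteq> -1"
    using normalized_univalent_sqrt[OF holf inj f0 w0(1)] by blast
  define k where "k = (\<lambda>u. - G (u * (3/4)))"
  have kmap: "u * (3/4) \<in> ball 0 1" if "u \<in> cball 0 1" for u :: complex
    using that by (simp add: norm_mult)
  have khol: "k holomorphic_on cball 0 1"
    unfolding k_def
    by (intro holomorphic_intros holomorphic_on_compose_gen[OF _ G(1), unfolded o_def])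
      (use kmap in auto)
  have "norm (k (v * (4/3))) \<le> exp (pi * exp (pi * (2 + 2 * 1 + 12 * (2/3) / (1 - 2/3))))"
  proof (rule Schottky[OF khol])
    show "\<not> (k z = 0 \<or> k z = 1)" if "z \<in> cball 0 1" for z
      using G(4)[OF kmap[OF that]] by (auto simp: k_def minus_equation_iff[of _ 1])
    show "norm (v * (4/3)) \<le> 2/3" using v by (simp add: norm_mult)
  qed (auto simp: k_def G(2))
  then have GS: "norm (G v) \<le> S" by (simp add: k_def S_def mult.commute)
  have "norm (f v) = norm w0 * norm (1 - G v ^ 2)"
    using G(3)[of v] v by (simp add: norm_mult)
  also have "\<dots> \<le> 2 * (1 + S ^ 2)"
  proof (rule mult_mono)
    have "norm (1 - G v ^ 2) \<le> 1 + norm (G v) ^ 2"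
      by (metis norm_one norm_power norm_triangle_ineq4)
    also have "\<dots> \<le> 1 + S ^ 2"
      using GS by (simp add: power_mono)
    finally show "norm (1 - G v ^ 2) \<le> 1 + S ^ 2" .
  qed (use w0 in auto)
  finally show ?thesis by (simp add: univalent_distortion_const_def S_def)
qed

lemma normalized_univalent_deriv2_bound:
  fixes f :: "complex \<Rightarrow> complex"
  assumes holf: "f holomorphic_on ball 0 1" and "inj_on f (ball 0 1)"
    and "f 0 = 0" and "deriv f 0 = 1"
  shows "norm (deriv (deriv f) 0) \<le> univalent_distortion_const"
proof -
  have "norm ((deriv ^^ 2) f 0) \<le> fact 2 * (univalent_distortion_const / 8) / (1/2) ^ 2"
  proof (rule Cauchy_inequality)
    show "f holomorphic_on ball 0 (1/2)" by (rule holomorphic_on_subset[OF holf]) auto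
    show "continuous_on (cball 0 (1/2)) f"
      by (intro holomorphic_on_imp_continuous_on holomorphic_on_subset[OF holf]) auto
    show "norm (f x) \<le> univalent_distortion_const / 8" if "norm (0 - x) = 1/2" for x
      using normalized_univalent_bounded_half_disc[OF assms] that by simp
  qed auto
  then show ?thesis by (simp add: numeral_2_eq_2)
qed

lemma univalent_deriv2_le:
  fixes \<phi> :: "complex \<Rightarrow> complex"
  assumes holp: "\<phi> holomorphic_on ball z d" and inj: "inj_on \<phi> (ball z d)" and d: "d > 0"
  shows "norm (deriv (deriv \<phi>) z) \<le> univalent_distortion_const / d * norm (deriv \<phi> z)"
proof -
  define c where "c = deriv \<phi> z"
  have cnz: "c \<noteq> 0" unfolding c_def
    using holomorphic_injective_imp_regular[OF holp open_ball inj] d by simp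
  define f where "f = (\<lambda>u. inverse (of_real d * c) * (\<phi> (of_real d * u + z) - \<phi> z))"
  have map: "of_real d * u + z \<in> ball z d" if "u \<in> ball 0 1" for u
    using that d by (simp add: dist_norm norm_mult)
  have hol_scaled: "(\<lambda>u. \<phi> (of_real d * u + z)) holomorphic_on ball 0 1"
    by (rule holomorphic_on_compose_gen[OF _ holp, unfolded o_def]) (auto intro!: holomorphic_intros map)
  have fhol: "f holomorphic_on ball 0 1"
    unfolding f_def by (intro holomorphic_intros hol_scaled)
  have higher_deriv_f: "(deriv ^^ n) f 0 = inverse (of_real d * c) * (of_real d ^ n * (deriv ^^ n) \<phi> z)"
    if "n > 0" for n
  proof -
    have "(deriv ^^ n) f 0 = inverse (of_real d * c) * (deriv ^^ n) (\<lambda>u. \<phi> (of_real d * u + z) - \<phi> z) 0"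
      unfolding f_def by (rule higher_deriv_cmult[where A="ball 0 1"]) (auto intro!: holomorphic_intros hol_scaled)
    also have "(deriv ^^ n) (\<lambda>u. \<phi> (of_real d * u + z) - \<phi> z) 0 = (deriv ^^ n) (\<lambda>u. \<phi> (of_real d * u + z)) 0"
      using that by (subst higher_deriv_diff[where S="ball 0 1"]) (auto intro: hol_scaled)
    also have "\<dots> = of_real d ^ n * (deriv ^^ n) \<phi> z"
      by (subst higher_deriv_compose_linear'[OF holp, where S="ball 0 1"]) (use map in auto)
    finally show ?thesis .
  qed
  have finj: "inj_on f (ball 0 1)"
  proof (rule inj_onI)
    fix u v assume uv: "u \<in> ball 0 1" "v \<in> ball 0 1" "f u = f v"
    then have "\<phi> (of_real d * u + z) = \<phi> (of_real d * v + z)"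
      using cnz d by (simp add: f_def)
    then have "of_real d * u + z = of_real d * v + z" using inj_onD[OF inj] map uv by blast
    then show "u = v" using d by simp
  qed
  have "deriv f 0 = 1" using higher_deriv_f[of 1] cnz d by (simp add: field_simps c_def)
  then have "norm (deriv (deriv f) 0) \<le> univalent_distortion_const"
    using normalized_univalent_deriv2_bound[OF fhol finj] by (simp add: f_def)
  moreover have "deriv (deriv f) 0 = of_real d * deriv (deriv \<phi>) z / c"
    using higher_deriv_f[of 2] d by (simp add: numeral_2_eq_2 power2_eq_square field_simps)
  ultimately have "norm (deriv (deriv \<phi>) z) * d \<le> univalent_distortion_const * norm c"
    using d cnz by (simp add: norm_mult norm_divide field_simps)
  then show ?thesis using d by (simp add: field_simps c_def)
qed

section \<open>The logarithmic derivative of \<open>B\<close> in the upper half-plane\<close>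

lemma zero_islimpt_upper_half:
  fixes V :: "complex set"
  assumes "open V" "0 \<in> V"
  shows "0 islimpt {z\<in>V. Im z > 0}"
proof -
  obtain r where r: "r > 0" "ball 0 r \<subseteq> V" using assms open_contains_ball by blast
  have "0 islimpt (\<lambda>t. \<i> * of_real t) ` {0<..<r}"
    using islimpt_isCont_image[OF islimpt_greaterThanLessThan1[OF r(1)], of "\<lambda>t. \<i> * of_real t"]
    by (auto simp: eventually_at_filter)
  moreover have "(\<lambda>t. \<i> * of_real t) ` {0<..<r} \<subseteq> {z\<in>V. Im z > 0}"
    using r by (auto simp: norm_mult intro!: subsetD[OF r(2)])
  ultimately show ?thesis by (rule islimpt_subset)
qed

lemma frequently_nonzero_of_univalent_primitive:
  fixes \<phi> B h :: "complex \<Rightarrow> complex"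
  assumes holp: "\<phi> holomorphic_on U" and U: "open U" and inj: "inj_on \<phi> U"
    and z: "z \<notin> U" "z islimpt U"
    and dphi: "\<And>w. w \<in> U \<Longrightarrow> h analytic_on {w} \<Longrightarrow> deriv \<phi> w = B w * h w"
  shows "\<exists>\<^sub>F w in at z. h w \<noteq> 0"
proof (rule ccontr)
  assume "\<not> (\<exists>\<^sub>F w in at z. h w \<noteq> 0)"
  then obtain e where e: "e > 0" "\<And>w. w \<noteq> z \<Longrightarrow> dist w z < e \<Longrightarrow> h w = 0"
    unfolding not_frequently eventually_at by auto
  obtain w where w: "w \<in> U" "w \<in> ball z e"
    using islimptE[OF z(2), of "ball z e"] e(1) by auto
  obtain d where d: "d > 0" "ball w d \<subseteq> U \<inter> ball z e"
    using openE[OF open_Int[OF U open_ball] IntI[OF w]] by blast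
  have "h holomorphic_on ball w d"
  proof (rule holomorphic_transform[of "\<lambda>_. 0"])
    fix x assume "x \<in> ball w d"
    then have "x \<in> U" "dist x z < e" using d by (auto simp: dist_commute)
    then show "0 = h x" using e z(1) by metis
  qed auto
  then have "h analytic_on {w}"
    using d(1) analytic_at_ball by blast
  moreover have "h w = 0" using e(2)[of w] w z(1) by (auto simp: dist_commute)
  ultimately have "deriv \<phi> w = 0" using dphi[OF w(1)] by simp
  then show False using holomorphic_injective_imp_regular[OF holp U inj w(1)] by simp
qed

lemma logderiv_bounded_on_compact:
  fixes g :: "complex \<Rightarrow> complex"
  assumes g: "g holomorphic_on S" "open S" and K: "compact K" "K \<subseteq> S"
    and gnz: "\<And>w. w \<in> K \<Longrightarrow> g w \<noteq> 0"
  obtains C where "C \<ge> 0" "\<And>w. w \<in> K \<Longrightarrow> norm (deriv g w / g w) \<le> C"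
proof -
  have "continuous_on K (\<lambda>w. deriv g w / g w)"
    using g K gnz by (intro continuous_intros holomorphic_on_imp_continuous_on holomorphic_on_subset[OF _ K(2)]
        holomorphic_deriv) auto
  then have "bounded ((\<lambda>w. deriv g w / g w) ` K)"
    using K by (intro compact_imp_bounded compact_continuous_image)
  then show thesis using that unfolding bounded_pos by (meson less_imp_le image_eqI)
qed

lemma meromorphic_local_factorization:
  fixes h :: "complex \<Rightarrow> complex"
  assumes h: "h meromorphic_on {z}" and nz: "\<exists>\<^sub>F w in at z. h w \<noteq> 0" and R: "R > 0"
  obtains g n r C where "0 < r" "r \<le> R" "C \<ge> 0" "g holomorphic_on ball z r"
    "\<And>w. w \<in> ball z r \<Longrightarrow> g w \<noteq> 0 \<and> norm (deriv g w / g w) \<le> C"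
    "\<And>w. w \<in> ball z r - {z} \<Longrightarrow> h w = g w * (w - z) powi n" "h analytic_on ball z r - {z}"
proof -
  obtain r1 where r1: "r1 > 0" "zor_poly h z holomorphic_on cball z r1" "zor_poly h z z \<noteq> 0"
    "\<And>w. w \<in> cball z r1 - {z} \<Longrightarrow> h w = zor_poly h z w * (w - z) powi zorder h z \<and> zor_poly h z w \<noteq> 0"
    using zorder_exist[OF meromorphic_on_isolated_singularity[OF h] meromorphic_on_not_essential[OF h] nz]
    by auto
  define g where "g = zor_poly h z"
  define r where "r = min R r1 / 2"
  have r: "0 < r" "r \<le> R" "cball z r \<subseteq> ball z r1" using R r1(1) by (auto simp: r_def)
  have gnz: "g w \<noteq> 0" if "w \<in> cball z r" for w
    using r1(3) r1(4)[of w] r that by (cases "w = z") (auto simp: g_def)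
  obtain C where C: "C \<ge> 0" "\<And>w. w \<in> cball z r \<Longrightarrow> norm (deriv g w / g w) \<le> C"
  proof (rule logderiv_bounded_on_compact[where S="ball z r1"])
    show "g holomorphic_on ball z r1" using r1(2) unfolding g_def by (rule holomorphic_on_subset) auto
  qed (use r gnz in auto)
  have ghol: "g holomorphic_on ball z r"
    using holomorphic_on_subset[OF r1(2)] r(3) unfolding g_def by (meson ball_subset_cball order_trans)
  have hg: "h w = g w * (w - z) powi zorder h z" if "w \<in> ball z r - {z}" for w
  proof -
    have "w \<in> cball z r1 - {z}" using that r(3) ball_subset_cball[of z r] ball_subset_cball[of z r1] by blast
    then show ?thesis using r1(4) by (simp add: g_def)
  qed
  have "h holomorphic_on ball z r - {z}"
    by (rule holomorphic_transform[of "\<lambda>w. g w * (w - z) powi zorder h z"])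
      (auto intro!: holomorphic_intros holomorphic_on_subset[OF ghol] simp: hg)
  then have "h analytic_on ball z r - {z}" by (simp add: analytic_on_open open_Diff)
  with r C ghol hg gnz show thesis using that by auto
qed

lemma logderiv_deriv_of_factorization:
  fixes \<phi> B g :: "complex \<Rightarrow> complex" and n :: int
  assumes ev: "\<forall>\<^sub>F w in nhds z. deriv \<phi> w = B w * g w * w powi n"
    and dB: "B field_differentiable (at z)" and dg: "g field_differentiable (at z)"
    and nz: "B z \<noteq> 0" "g z \<noteq> 0" "z \<noteq> 0"
  shows "deriv (deriv \<phi>) z / deriv \<phi> z = deriv B z / B z + deriv g z / g z + of_int n / z"
proof -
  have dP: "((\<lambda>w. w powi n) has_field_derivative of_int n * z powi n / z) (at z)"
  proof -
    have "((\<lambda>w. w powi n) has_field_derivative of_int n * z powi (n - 1) * 1) (at z)"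
      by (rule DERIV_power_int[OF DERIV_ident]) (use nz in auto)
    then show ?thesis using nz by (simp add: power_int_diff)
  qed
  have "((\<lambda>w. B w * g w * w powi n) has_field_derivative
      (deriv B z * g z + B z * deriv g z) * z powi n + B z * g z * (of_int n * z powi n / z)) (at z)"
    using DERIV_mult[OF DERIV_mult[OF dB[unfolded DERIV_deriv_iff_field_differentiable[symmetric]]
        dg[unfolded DERIV_deriv_iff_field_differentiable[symmetric]]] dP]
    by (simp add: algebra_simps)
  then have "deriv (deriv \<phi>) z =
      (deriv B z * g z + B z * deriv g z) * z powi n + B z * g z * (of_int n * z powi n / z)"
    using deriv_cong_ev[OF ev refl] DERIV_imp_deriv by simp
  moreover have "deriv \<phi> z = B z * g z * z powi n" using ev eventually_nhds_x_imp_x by blast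
  ultimately show ?thesis using nz by (simp add: divide_simps) (simp add: algebra_simps)
qed

lemma univalent_logderiv_deriv_le_upper_half_disc:
  fixes \<phi> :: "complex \<Rightarrow> complex"
  assumes phol: "\<phi> holomorphic_on {z. Im z > 0} \<inter> ball 0 r"
    and pinj: "inj_on \<phi> ({z. Im z > 0} \<inter> ball 0 r)"
    and z: "Im z > 0" "norm z \<le> r/2"
  shows "norm (deriv (deriv \<phi>) z / deriv \<phi> z) \<le>
    univalent_distortion_const / Im z + univalent_distortion_const / norm z"
proof -
  let ?D = univalent_distortion_const
  have D0: "?D > 0" unfolding univalent_distortion_const_def by (simp add: add_pos_nonneg)
  have nz: "norm z > 0" using z by auto
  define d where "d = min (Im z) (r/2)"
  have d: "d > 0" using z nz unfolding d_def by linarith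
  have "ball z d \<subseteq> {z. Im z > 0} \<inter> ball 0 r"
  proof
    fix w assume "w \<in> ball z d"
    then have "norm (w - z) < d" by (simp add: dist_norm norm_minus_commute)
    moreover have "\<bar>Im (w - z)\<bar> \<le> norm (w - z)" by (rule abs_Im_le_cmod)
    moreover have "norm w \<le> norm z + norm (w - z)" by (rule norm_triangle_sub)
    ultimately show "w \<in> {z. Im z > 0} \<inter> ball 0 r" using z by (auto simp: d_def)
  qed
  then have "norm (deriv (deriv \<phi>) z) \<le> ?D / d * norm (deriv \<phi> z)"
    using univalent_deriv2_le holomorphic_on_subset[OF phol] inj_on_subset[OF pinj] d by blast
  then have "norm (deriv (deriv \<phi>) z / deriv \<phi> z) \<le> ?D / d"
    using D0 d by (cases "deriv \<phi> z = 0") (simp_all add: norm_divide divide_le_eq)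
  also have "?D / d \<le> ?D / Im z + ?D / norm z"
  proof (cases "Im z \<le> r/2")
    case False
    then have "d = r/2" by (simp add: d_def)
    then have "?D / d \<le> ?D / norm z" using D0 nz z(2) by (intro divide_left_mono) (use d in auto)
    moreover have "?D / Im z > 0" using D0 z by simp
    ultimately show ?thesis by linarith
  qed (use D0 nz in \<open>simp add: d_def\<close>)
  finally show ?thesis .
qed

lemma logderiv_bound_upper_half_disc:
  fixes \<phi> B g :: "complex \<Rightarrow> complex" and n :: int and r C :: real
  assumes phol: "\<phi> holomorphic_on {z. Im z > 0} \<inter> ball 0 r"
    and pinj: "inj_on \<phi> ({z. Im z > 0} \<inter> ball 0 r)"
    and Bhol: "B holomorphic_on ball 0 r - {0}" and Bnz: "\<And>z. z \<in> ball 0 r - {0} \<Longrightarrow> B z \<noteq> 0"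
    and ghol: "g holomorphic_on ball 0 r" and gnz: "\<And>z. z \<in> ball 0 r \<Longrightarrow> g z \<noteq> 0"
    and dphi: "\<And>z. z \<in> {z. Im z > 0} \<inter> ball 0 r \<Longrightarrow> deriv \<phi> z = B z * g z * z powi n"
    and C: "\<And>z. z \<in> ball 0 r \<Longrightarrow> norm (deriv g z / g z) \<le> C" and C0: "C \<ge> 0"
    and z: "Im z > 0" "norm z \<le> r/2"
  shows "norm (deriv B z / B z) \<le>
    univalent_distortion_const / Im z + (univalent_distortion_const + C * r + \<bar>of_int n\<bar>) / norm z"
proof -
  let ?D = univalent_distortion_const
  have nz: "norm z > 0" using z by auto
  then have zr: "norm z < r" using z(2) by linarith
  then have zS: "z \<in> ball 0 r - {0}" using nz by auto
  have zU: "z \<in> {z. Im z > 0} \<inter> ball 0 r" using z zr by simp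
  have "deriv (deriv \<phi>) z / deriv \<phi> z = deriv B z / B z + deriv g z / g z + of_int n / z"
  proof (rule logderiv_deriv_of_factorization)
    have "open ({z. Im z > 0} \<inter> ball 0 r)" by (intro open_Int open_ball open_halfspace_Im_gt)
    then have "\<forall>\<^sub>F w in nhds z. w \<in> {z. Im z > 0} \<inter> ball 0 r" using zU by (rule eventually_nhds_in_open)
    then show "\<forall>\<^sub>F w in nhds z. deriv \<phi> w = B w * g w * w powi n"
      by (rule eventually_mono) (use dphi in auto)
    show "B field_differentiable at z"
      using Bhol zS by (auto simp: holomorphic_on_def at_within_open[of _ "ball 0 r - {0}"] open_Diff)
    show "g field_differentiable at z"
      using ghol zr by (auto simp: holomorphic_on_def at_within_open[of _ "ball 0 r"])
  qed (use Bnz[OF zS] gnz zr zS in auto)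
  then have "norm (deriv B z / B z) \<le>
      norm (deriv (deriv \<phi>) z / deriv \<phi> z) + norm (deriv g z / g z) + norm (of_int n / z)"
    using norm_triangle_ineq4[of "deriv (deriv \<phi>) z / deriv \<phi> z - deriv g z / g z" "of_int n / z"]
      norm_triangle_ineq4[of "deriv (deriv \<phi>) z / deriv \<phi> z" "deriv g z / g z"]
    by (simp add: algebra_simps)
  also have "norm (deriv (deriv \<phi>) z / deriv \<phi> z) \<le> ?D / Im z + ?D / norm z"
    by (rule univalent_logderiv_deriv_le_upper_half_disc[OF phol pinj z])
  also have "norm (deriv g z / g z) \<le> C * r / norm z"
  proof -
    have "norm (deriv g z / g z) * norm z \<le> C * r"
      using C[of z] zr C0 by (intro mult_mono) auto
    then show ?thesis using nz by (simp add: le_divide_eq)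
  qed
  also have "norm (of_int n / z) = \<bar>of_int n\<bar> / norm z" by (simp add: norm_divide)
  finally show ?thesis by (simp add: add_divide_distrib)
qed

section \<open>Reflection across the real axis\<close>

lemma reflection_unimodular_on_reals:
  fixes B :: "complex \<Rightarrow> complex"
  assumes r: "r > 0" and Bhol: "B holomorphic_on ball 0 r - {0}"
    and Breal: "\<And>x. x \<in> ball 0 r - {0} \<Longrightarrow> x \<in> \<real> \<Longrightarrow> norm (B x) = 1"
    and z: "z \<in> ball 0 r - {0}"
  shows "B z * cnj (B (cnj z)) = 1"
proof -
  define S where "S = ball (0::complex) r - {0}"
  have oS: "open S" and cS: "connected S" unfolding S_def by (auto intro: connected_open_delete)
  have cnjS: "cnj ` S = S" by (force simp: S_def intro: image_eqI[where x="cnj _"])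
  have "(cnj \<circ> B \<circ> cnj) holomorphic_on S"
    by (rule holomorphic_on_compose_cnj_cnj) (use Bhol cnjS oS in \<open>auto simp: S_def\<close>)
  then have hol: "(\<lambda>w. B w * (cnj \<circ> B \<circ> cnj) w - 1) holomorphic_on S"
    using Bhol[folded S_def] by (intro holomorphic_intros)
  have seg: "of_real ` {r/4..3*r/4} \<subseteq> S" using r by (auto simp: S_def)
  have "complex_of_real (r/2) islimpt of_real ` {r/4..3*r/4}"
  proof (rule islimpt_isCont_image)
    show "\<forall>\<^sub>F y in at (r/2). complex_of_real y \<noteq> complex_of_real (r/2)"
      unfolding of_real_eq_iff by (simp add: eventually_at_filter)
  qed (use r in auto)
  then have "B z * (cnj \<circ> B \<circ> cnj) z - 1 = 0"
  proof (rule analytic_continuation[OF hol oS cS seg, rotated])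
    fix x :: complex assume "x \<in> of_real ` {r/4..3*r/4}"
    then have x: "x \<in> S" "x \<in> \<real>" "cnj x = x" using seg by (auto simp: Reals_cnj_iff)
    then have "B x * (cnj \<circ> B \<circ> cnj) x = of_real (norm (B x)) ^ 2"
      using complex_norm_square[of "B x"] by simp
    then show "B x * (cnj \<circ> B \<circ> cnj) x - 1 = 0" using Breal x by (simp add: S_def)
  qed (use r z in \<open>auto simp: S_def\<close>)
  then show ?thesis by simp
qed

lemma norm_logderiv_cnj:
  fixes B :: "complex \<Rightarrow> complex"
  assumes r: "r > 0" and Bhol: "B holomorphic_on ball 0 r - {0}"
    and Bnz: "\<And>z. z \<in> ball 0 r - {0} \<Longrightarrow> B z \<noteq> 0"
    and Breal: "\<And>x. x \<in> ball 0 r - {0} \<Longrightarrow> x \<in> \<real> \<Longrightarrow> norm (B x) = 1"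
    and z: "z \<in> ball 0 r - {0}"
  shows "norm (deriv B (cnj z) / B (cnj z)) = norm (deriv B z / B z)"
proof -
  define S where "S = ball (0::complex) r - {0}"
  have oS: "open S" by (simp add: S_def open_Diff)
  have zS: "z \<in> S" and czS: "cnj z \<in> S" using z by (auto simp: S_def)
  have prod: "B w * cnj (B (cnj w)) = 1" if "w \<in> S" for w
    using reflection_unimodular_on_reals[OF r Bhol Breal] that by (simp add: S_def)
  have d1: "((cnj \<circ> B \<circ> cnj) has_field_derivative cnj (deriv B (cnj z))) (at z)"
    by (rule has_field_derivative_cnj_cnj) (rule holomorphic_derivI[OF Bhol[folded S_def] oS czS])
  have "((\<lambda>w. 1 / B w) has_field_derivative - deriv B z / (B z)^2) (at z)"
    using holomorphic_derivI[OF Bhol[folded S_def] oS zS] Bnz[OF z]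
    by (auto intro!: derivative_eq_intros simp: power2_eq_square)
  then have d2: "((cnj \<circ> B \<circ> cnj) has_field_derivative - deriv B z / (B z)^2) (at z)"
    by (rule has_field_derivative_transform_within_open[OF _ oS zS])
      (use prod Bnz in \<open>auto simp: S_def field_simps\<close>)
  have "cnj (deriv B (cnj z)) = - deriv B z / (B z)^2" using DERIV_unique[OF d1 d2] .
  moreover have "cnj (B (cnj z)) = 1 / B z" using prod[OF zS] Bnz[OF z] by (simp add: field_simps)
  ultimately have "norm (cnj (deriv B (cnj z)) / cnj (B (cnj z))) = norm (deriv B z / B z)"
    using Bnz[OF z] by (simp add: norm_divide norm_power power2_eq_square)
  then show ?thesis by (simp add: norm_divide)
qed

section \<open>From a half-plane bound to boundedness\<close>

lemma norm_circle_kernel: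
  fixes \<zeta> :: complex and x \<rho> :: real
  assumes "norm (\<zeta> - of_real x) = \<rho>"
  shows "norm ((\<zeta> - of_real x)^2 - (of_real \<rho>)^2) = 2 * \<rho> * \<bar>Im \<zeta>\<bar>"
proof -
  define w where "w = \<zeta> - of_real x"
  have "(of_real \<rho>)^2 = w * cnj w" using complex_norm_square[of w] assms by (simp add: w_def)
  then have "(\<zeta> - of_real x)^2 - (of_real \<rho>)^2 = w * (w - cnj w)"
    by (simp add: w_def power2_eq_square algebra_simps)
  also have "w - cnj w = 2 * \<i> * of_real (Im w)" by (simp add: complex_diff_cnj)
  finally show ?thesis using assms by (simp add: w_def norm_mult)
qed

text \<open>
  Cauchy's formula for \<open>F\<close> times the kernel \<open>(\<zeta> - x)\<^sup>2 - \<rho>\<^sup>2\<close>: on the circle the kernel has modulus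
  \<open>2 * \<rho> * \<bar>Im \<zeta>\<bar>\<close>, which absorbs the weight \<open>\<bar>Im \<zeta>\<bar>\<close>, while at \<open>z\<close> it has modulus at least \<open>\<rho>\<^sup>2\<close>.
\<close>

lemma norm_le_of_Im_weighted_bound_on_circle:
  fixes F :: "complex \<Rightarrow> complex" and x \<rho> M :: real
  assumes F: "F holomorphic_on cball (of_real x) \<rho>" and \<rho>: "\<rho> > 0"
    and M: "\<And>u. norm (u - of_real x) = \<rho> \<Longrightarrow> norm (F u) * \<bar>Im u\<bar> \<le> M"
    and z: "Re z = x" "\<bar>Im z\<bar> \<le> \<rho>/2"
  shows "norm (F z) \<le> 4 * M / \<rho>"
proof -
  have M0: "M \<ge> 0" using M[of "of_real x + of_real \<rho>"] \<rho> by simp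
  define \<Phi> where "\<Phi> = (\<lambda>\<zeta>. F \<zeta> * ((\<zeta> - of_real x)^2 - (of_real \<rho>)^2))"
  have zx: "z - of_real x = \<i> * of_real (Im z)" using z by (simp add: complex_eq_iff)
  have "norm (z - of_real x) < \<rho>" using z \<rho> by (simp add: zx norm_mult)
  then have "((\<lambda>u. \<Phi> u / (u - z)) has_contour_integral (2 * of_real pi * \<i> * \<Phi> z)) (circlepath (of_real x) \<rho>)"
    unfolding \<Phi>_def using F
    by (intro Cauchy_integral_circlepath)
      (auto intro!: holomorphic_intros holomorphic_on_imp_continuous_on simp: dist_norm norm_minus_commute)
  moreover have "norm (\<Phi> u / (u - z)) \<le> 4 * M" if u: "norm (u - of_real x) = \<rho>" for u
  proof -
    have "\<rho> \<le> norm (u - z) + norm (z - of_real x)"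
      using u norm_triangle_ineq[of "u - z" "z - of_real x"] by simp
    then have uz: "norm (u - z) \<ge> \<rho> / 2" using z by (simp add: zx norm_mult)
    have "norm (\<Phi> u) = norm (F u) * \<bar>Im u\<bar> * (2 * \<rho>)"
      using norm_circle_kernel[OF u] by (simp add: \<Phi>_def norm_mult)
    also have "\<dots> \<le> M * (2 * \<rho>)" using M[OF u] \<rho> by (intro mult_right_mono) auto
    finally have "norm (\<Phi> u / (u - z)) \<le> M * (2 * \<rho>) / (\<rho> / 2)"
      unfolding norm_divide using uz \<rho> by (intro frac_le) (use M0 in auto)
    then show ?thesis using \<rho> by (simp add: field_simps)
  qed
  ultimately have "norm (2 * of_real pi * \<i> * \<Phi> z) \<le> 4 * M * (2 * pi * \<rho>)"
    using \<rho> M0 by (intro has_contour_integral_bound_circlepath) auto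
  then have "norm (\<Phi> z) \<le> 4 * M * \<rho>" by (simp add: norm_mult)
  moreover have "(z - of_real x)^2 - (of_real \<rho>)^2 = - of_real ((Im z)^2 + \<rho>^2)"
    by (simp add: zx power_mult_distrib)
  then have "norm ((z - of_real x)^2 - (of_real \<rho>)^2) = (Im z)^2 + \<rho>^2"
    by (simp only: norm_minus_cancel norm_of_real) simp
  ultimately have "norm (F z) * \<rho>^2 \<le> 4 * M * \<rho>"
    by (smt (verit) \<Phi>_def mult_left_mono norm_ge_zero norm_mult zero_le_power2)
  then show ?thesis using \<rho> by (simp add: power2_eq_square field_simps)
qed

lemma cball_of_real_subset_punctured_ball:
  fixes x R :: real
  assumes "x \<noteq> 0" "3/2 * \<bar>x\<bar> < R"
  shows "cball (complex_of_real x) (\<bar>x\<bar> / 2) \<subseteq> ball 0 R - {0}"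
proof
  fix \<zeta> :: complex assume "\<zeta> \<in> cball (of_real x) (\<bar>x\<bar> / 2)"
  then have "norm (\<zeta> - of_real x) \<le> \<bar>x\<bar> / 2" by (simp add: dist_norm norm_minus_commute)
  moreover have "norm \<zeta> \<le> norm (of_real x :: complex) + norm (\<zeta> - of_real x)"
    by (rule norm_triangle_sub)
  moreover have "norm (of_real x :: complex) \<le> norm \<zeta> + norm (\<zeta> - of_real x)"
    using norm_triangle_sub[of "of_real x" \<zeta>] by (simp add: norm_minus_commute)
  ultimately show "\<zeta> \<in> ball 0 R - {0}" using assms by auto
qed

text \<open>
  Far from the real axis the hypothesis suffices; near it, use the circle of radius \<open>\<bar>Re z\<bar> / 2\<close>
  centred at \<open>Re z\<close>.
\<close>

lemma norm_le_inverse_norm_of_Im_bound: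
  fixes F :: "complex \<Rightarrow> complex"
  assumes F: "F holomorphic_on ball 0 R - {0}"
    and bnd: "\<And>\<zeta>. \<zeta> \<in> ball 0 R - {0} \<Longrightarrow> Im \<zeta> \<noteq> 0 \<Longrightarrow> norm (F \<zeta>) \<le> A / \<bar>Im \<zeta>\<bar> + K / norm \<zeta>"
    and A: "A \<ge> 0" and K: "K \<ge> 0"
    and z: "z \<noteq> 0" "norm z \<le> R/2"
  shows "norm (F z) \<le> 15 * (A + K) / norm z"
proof -
  have nz: "norm z > 0" using z by simp
  have z_le: "norm z \<le> \<bar>Re z\<bar> + \<bar>Im z\<bar>" by (rule cmod_le)
  show ?thesis
  proof (cases "\<bar>Im z\<bar> \<le> \<bar>Re z\<bar> / 4")
    case False
    then have Im_large: "norm z \<le> 5 * \<bar>Im z\<bar>" using z_le by linarith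
    then have "Im z \<noteq> 0" using nz by auto
    moreover have "norm z < R" using z(2) nz by linarith
    then have "z \<in> ball 0 R - {0}" using z by simp
    moreover have "A / \<bar>Im z\<bar> \<le> 5 * A / norm z"
      using Im_large A nz \<open>Im z \<noteq> 0\<close> by (simp add: field_simps mult_left_mono)
    ultimately have "norm (F z) \<le> 5 * A / norm z + K / norm z" using bnd[of z] by force
    also have "\<dots> \<le> 15 * (A + K) / norm z"
      using nz A K by (simp add: divide_right_mono add_divide_distrib[symmetric])
    finally show ?thesis .
  next
    case True
    define x where "x = Re z"
    define \<rho> where "\<rho> = \<bar>x\<bar> / 2"
    have zx: "norm z \<le> 5/4 * \<bar>x\<bar>" using True z_le by (simp add: x_def)
    then have \<rho>: "\<rho> > 0" using nz unfolding \<rho>_def by linarith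
    have x_le: "\<bar>x\<bar> \<le> norm z" by (simp add: x_def abs_Re_le_cmod)
    have csub: "cball (complex_of_real x) \<rho> \<subseteq> ball 0 R - {0}"
      unfolding \<rho>_def using \<rho> x_le z(2) by (intro cball_of_real_subset_punctured_ball) (auto simp: \<rho>_def)
    have "norm (F z) \<le> 4 * (A + K) / \<rho>"
    proof (rule norm_le_of_Im_weighted_bound_on_circle[where F=F and z=z])
      show "F holomorphic_on cball (complex_of_real x) \<rho>" using F csub by (rule holomorphic_on_subset)
      show "norm (F u) * \<bar>Im u\<bar> \<le> A + K" if u: "norm (u - of_real x) = \<rho>" for u
      proof (cases "Im u = 0")
        case False
        have "u \<in> cball (of_real x) \<rho>" using u by (simp add: dist_norm norm_minus_commute)
        then have "u \<in> ball 0 R - {0}" using csub by blast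
        then have nu: "norm u > 0" and "norm (F u) \<le> A / \<bar>Im u\<bar> + K / norm u"
          using bnd False by auto
        then have "norm (F u) * \<bar>Im u\<bar> \<le> A + K * (\<bar>Im u\<bar> / norm u)"
          using False by (simp add: field_simps mult_right_mono)
        also have "\<dots> \<le> A + K"
          using abs_Im_le_cmod[of u] nu K by (intro add_left_mono mult_left_le) auto
        finally show ?thesis .
      qed (use A K in auto)
    qed (use \<rho> True in \<open>auto simp: x_def \<rho>_def\<close>)
    also have "\<dots> = 8 * (A + K) / \<bar>x\<bar>" by (simp add: \<rho>_def)
    also have "\<dots> \<le> 8 * (A + K) / (4/5 * norm z)"
      using zx nz A K \<rho> by (intro divide_left_mono) (auto simp: \<rho>_def)
    also have "\<dots> \<le> 15 * (A + K) / norm z"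
      using nz A K by (simp add: field_simps)
    finally show ?thesis .
  qed
qed

lemma part_circlepath_image_subset_halfplane:
  fixes \<rho> s t R :: real
  assumes \<rho>: "0 < \<rho>" "\<rho> < R" and st: "s \<le> t" "t - s < pi"
  shows "path_image (part_circlepath 0 \<rho> s t) \<subseteq> ball 0 R \<inter> {w. inner (exp (\<i> * of_real ((s+t)/2))) w > 0}"
proof
  fix w assume "w \<in> path_image (part_circlepath 0 \<rho> s t)"
  then obtain y where y: "w = \<rho> * exp (\<i> * of_real y)" "s \<le> y" "y \<le> t"
    using path_image_part_circlepath[OF st(1)] by auto
  have "norm w = \<rho>" using y \<rho> by (simp add: norm_mult)
  moreover have "inner (exp (\<i> * of_real ((s+t)/2))) w = \<rho> * cos (y - (s+t)/2)"
    unfolding y(1) by (simp only: cis_conv_exp[symmetric]) (simp add: inner_complex_def cos_diff algebra_simps)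
  moreover have "cos (y - (s+t)/2) > 0"
    by (rule cos_gt_zero_pi) (use y st in \<open>auto simp: field_simps\<close>)
  ultimately show "w \<in> ball 0 R \<inter> {w. inner (exp (\<i> * of_real ((s+t)/2))) w > 0}"
    using \<rho> by auto
qed

lemma ln_norm_diff_le_on_part_circlepath:
  fixes B :: "complex \<Rightarrow> complex"
  assumes W: "convex W" "open W" and Bhol: "B holomorphic_on W" and Bnz: "\<And>w. w \<in> W \<Longrightarrow> B w \<noteq> 0"
    and \<rho>: "0 < \<rho>" and st: "s \<le> t"
    and img: "path_image (part_circlepath 0 \<rho> s t) \<subseteq> W"
    and M: "\<And>w. w \<in> path_image (part_circlepath 0 \<rho> s t) \<Longrightarrow> norm (deriv B w / B w) \<le> M"
    and M0: "M \<ge> 0"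
  shows "\<bar>ln (norm (B (\<rho> * exp (\<i> * t)))) - ln (norm (B (\<rho> * exp (\<i> * s))))\<bar> \<le> M * \<rho> * (t - s)"
proof -
  let ?\<gamma> = "part_circlepath 0 \<rho> s t"
  obtain L where L: "L holomorphic_on W" "\<And>w. w \<in> W \<Longrightarrow> B w = exp (L w)"
    using contractible_imp_holomorphic_log[OF Bhol convex_imp_contractible[OF W(1)] Bnz] by blast
  have dL: "(L has_field_derivative deriv B w / B w) (at w within W)" if w: "w \<in> W" for w
  proof -
    have dl: "(L has_field_derivative deriv L w) (at w)" using holomorphic_derivI[OF L(1) W(2) w] .
    then have "((\<lambda>w. exp (L w)) has_field_derivative exp (L w) * deriv L w) (at w)"
      by (auto intro!: derivative_eq_intros)
    then have "(B has_field_derivative exp (L w) * deriv L w) (at w)"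
      by (rule has_field_derivative_transform_within_open[OF _ W(2) w]) (use L(2) in auto)
    then have "deriv L w = deriv B w / B w" using L(2)[OF w] DERIV_imp_deriv by fastforce
    then show ?thesis using dl by (simp add: has_field_derivative_at_within)
  qed
  have "((\<lambda>w. deriv B w / B w) has_contour_integral (L (pathfinish ?\<gamma>) - L (pathstart ?\<gamma>))) ?\<gamma>"
    by (rule contour_integral_primitive[OF dL valid_path_part_circlepath img])
  then have "norm (L (pathfinish ?\<gamma>) - L (pathstart ?\<gamma>)) \<le> M * \<rho> * (t - s)"
    by (rule has_contour_integral_bound_part_circlepath[OF _ M0 \<rho> st M])
  moreover have "pathstart ?\<gamma> \<in> W" "pathfinish ?\<gamma> \<in> W"
    using img pathstart_in_path_image pathfinish_in_path_image by blast+
  moreover have "ln (norm (B w)) = Re (L w)" if "w \<in> W" for w using L(2)[OF that] by simp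
  ultimately show ?thesis using abs_Re_le_cmod[of "L (pathfinish ?\<gamma>) - L (pathstart ?\<gamma>)"]
    by simp
qed

lemma ln_norm_diff_le_on_short_arc:
  fixes B :: "complex \<Rightarrow> complex" and \<rho> s t :: real
  assumes Bhol: "B holomorphic_on ball 0 R - {0}" and Bnz: "\<And>z. z \<in> ball 0 R - {0} \<Longrightarrow> B z \<noteq> 0"
    and K: "\<And>z. z \<in> ball 0 R - {0} \<Longrightarrow> norm (deriv B z / B z) \<le> K / norm z" and K0: "K \<ge> 0"
    and \<rho>: "0 < \<rho>" "\<rho> < R" and st: "s \<le> t" "t - s < pi"
  shows "\<bar>ln (norm (B (\<rho> * exp (\<i> * t)))) - ln (norm (B (\<rho> * exp (\<i> * s))))\<bar> \<le> K * pi"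
proof -
  define W where "W = ball 0 R \<inter> {w. inner (exp (\<i> * of_real ((s+t)/2))) w > 0}"
  have Wsub: "W \<subseteq> ball 0 R - {0}" by (auto simp: W_def)
  have img: "path_image (part_circlepath 0 \<rho> s t) \<subseteq> W"
    unfolding W_def by (rule part_circlepath_image_subset_halfplane[OF \<rho> st])
  have "\<bar>ln (norm (B (\<rho> * exp (\<i> * t)))) - ln (norm (B (\<rho> * exp (\<i> * s))))\<bar> \<le> (K / \<rho>) * \<rho> * (t - s)"
  proof (rule ln_norm_diff_le_on_part_circlepath[OF _ _ holomorphic_on_subset[OF Bhol Wsub] _ \<rho>(1) st(1) img])
    show "convex W" "open W" unfolding W_def
      by (intro convex_Int convex_ball convex_halfspace_gt open_Int open_ball open_halfspace_gt)+
    show "B w \<noteq> 0" if "w \<in> W" for w using Bnz Wsub that by blast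
    fix w assume w: "w \<in> path_image (part_circlepath 0 \<rho> s t)"
    then have "norm w = \<rho>" using in_path_image_part_circlepath[OF w st(1)] \<rho> by simp
    moreover have "w \<in> ball 0 R - {0}" using img Wsub w by blast
    ultimately show "norm (deriv B w / B w) \<le> K / \<rho>" using K[of w] by simp
  qed (use K0 \<rho> in auto)
  also have "\<dots> \<le> K * pi" using \<rho> st K0 by (simp add: mult_left_mono)
  finally show ?thesis .
qed

text \<open>
  Integrate \<open>B'/B\<close> along the circle through \<open>z\<close> centred at 0, starting on the real axis, where
  \<open>ln (norm B) = 0\<close>.
\<close>

lemma norm_le_exp_of_logderiv_bound:
  fixes B :: "complex \<Rightarrow> complex"
  assumes Bhol: "B holomorphic_on ball 0 R - {0}" and Bnz: "\<And>z. z \<in> ball 0 R - {0} \<Longrightarrow> B z \<noteq> 0"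
    and Breal: "\<And>x. x \<in> ball 0 R - {0} \<Longrightarrow> x \<in> \<real> \<Longrightarrow> norm (B x) = 1"
    and K: "\<And>z. z \<in> ball 0 R - {0} \<Longrightarrow> norm (deriv B z / B z) \<le> K / norm z" and K0: "K \<ge> 0"
    and z: "z \<in> ball 0 R - {0}"
  shows "norm (B z) \<le> exp (K * pi)"
proof -
  define \<rho> where "\<rho> = norm z"
  have \<rho>: "0 < \<rho>" "\<rho> < R" using z by (auto simp: \<rho>_def)
  have zeq: "z = \<rho> * exp (\<i> * Arg z)" using Arg_eq[of z] z by (simp add: \<rho>_def)
  have arc: "\<bar>ln (norm (B (\<rho> * exp (\<i> * t)))) - ln (norm (B (\<rho> * exp (\<i> * s))))\<bar> \<le> K * pi"
    if "s \<le> t" "t - s < pi" for s t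
    using ln_norm_diff_le_on_short_arc[OF Bhol Bnz K K0 \<rho> that] by blast
  have base: "ln (norm (B (\<rho> * exp (\<i> * 0)))) = 0" using Breal[of "of_real \<rho>"] \<rho> by simp
  have "\<bar>ln (norm (B z))\<bar> \<le> K * pi"
  proof (cases "Arg z = pi")
    case True
    then have "z \<in> \<real>" using Arg_eq_pi_iff by auto
    then show ?thesis using Breal z K0 by simp
  next
    case False
    then have "-pi < Arg z" "Arg z < pi" using mpi_less_Arg Arg_le_pi by (auto simp: less_le)
    then show ?thesis
      using arc[of 0 "Arg z"] arc[of "Arg z" 0] base zeq by (cases "Arg z \<ge> 0") (auto simp: abs_minus_commute)
  qed
  moreover have "norm (B z) > 0" using Bnz z by simp
  ultimately show ?thesis by (metis abs_le_D1 exp_le_cancel_iff exp_ln)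
qed

lemma bounded_of_upper_half_logderiv_bound:
  fixes B :: "complex \<Rightarrow> complex"
  assumes r: "r > 0" and Bhol: "B holomorphic_on ball 0 r - {0}"
    and Bnz: "\<And>z. z \<in> ball 0 r - {0} \<Longrightarrow> B z \<noteq> 0"
    and Breal: "\<And>x. x \<in> ball 0 r - {0} \<Longrightarrow> x \<in> \<real> \<Longrightarrow> norm (B x) = 1"
    and upper: "\<And>z. Im z > 0 \<Longrightarrow> norm z \<le> r/2 \<Longrightarrow> norm (deriv B z / B z) \<le> A / Im z + K / norm z"
    and A: "A \<ge> 0" and K: "K \<ge> 0"
  shows "\<exists>M. \<forall>z \<in> ball 0 (r/4) - {0}. norm (B z) \<le> M"
proof -
  have half_sub: "ball 0 (r/2) - {0} \<subseteq> ball (0::complex) r - {0}"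
    and quarter_sub: "ball 0 (r/4) - {0} \<subseteq> ball (0::complex) r - {0}"
    using r by (intro Diff_mono subset_ball; simp)+
  have both_halves: "norm (deriv B \<zeta> / B \<zeta>) \<le> A / \<bar>Im \<zeta>\<bar> + K / norm \<zeta>"
    if \<zeta>: "\<zeta> \<in> ball 0 (r/2) - {0}" "Im \<zeta> \<noteq> 0" for \<zeta>
  proof (cases "Im \<zeta> > 0")
    case False
    then have "norm (deriv B (cnj \<zeta>) / B (cnj \<zeta>)) \<le> A / \<bar>Im \<zeta>\<bar> + K / norm \<zeta>"
      using upper[of "cnj \<zeta>"] \<zeta> by simp
    moreover have "\<zeta> \<in> ball 0 r - {0}" using \<zeta>(1) half_sub by blast
    ultimately show ?thesis using norm_logderiv_cnj[OF r Bhol Bnz Breal] by simp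
  qed (use upper \<zeta> in auto)
  have logderiv: "norm (deriv B z / B z) \<le> 15 * (A + K) / norm z" if z: "z \<in> ball 0 (r/4) - {0}" for z
  proof (rule norm_le_inverse_norm_of_Im_bound[OF _ both_halves A K])
    show "(\<lambda>z. deriv B z / B z) holomorphic_on ball 0 (r/2) - {0}"
      using Bnz half_sub
      by (intro holomorphic_intros holomorphic_on_subset[OF Bhol half_sub]
          holomorphic_on_subset[OF holomorphic_deriv[OF Bhol] half_sub]) (auto simp: open_Diff)
  qed (use z in auto)
  have "norm (B z) \<le> exp (15 * (A + K) * pi)" if "z \<in> ball 0 (r/4) - {0}" for z
    by (rule norm_le_exp_of_logderiv_bound[OF holomorphic_on_subset[OF Bhol quarter_sub] _ _ logderiv _ that])
      (use Bnz Breal quarter_sub A K in auto)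
  then show ?thesis by blast
qed

lemma tendsto_of_bounded_near_isolated:
  fixes f :: "complex \<Rightarrow> complex"
  assumes f: "f holomorphic_on ball z r - {z}" and r: "r > 0"
    and M: "\<And>w. w \<in> ball z r - {z} \<Longrightarrow> norm (f w) \<le> M"
  shows "\<exists>c. (f \<longlongrightarrow> c) (at z)"
proof -
  have "\<forall>\<^sub>F w in at z. norm (f w) \<le> M"
    unfolding eventually_at using r M by (intro exI[of _ r]) (auto simp: dist_commute)
  then obtain g where g: "g holomorphic_on ball z r" "\<And>w. w \<in> ball z r - {z} \<Longrightarrow> g w = f w"
    using holomorphic_on_extend_bounded[OF f] r by auto
  have "(g \<longlongrightarrow> g z) (at z)"
    using holomorphic_on_imp_continuous_on[OF g(1)] r
    by (simp add: continuous_on_eq_continuous_at continuous_at)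
  moreover have "\<forall>\<^sub>F w in at z. g w = f w"
    unfolding eventually_at using r g(2) by (intro exI[of _ r]) (auto simp: dist_commute)
  ultimately show ?thesis using Lim_transform_eventually by blast
qed

lemma tendsto_at_0_of_univalent_primitive:
  fixes \<phi> B g :: "complex \<Rightarrow> complex" and n :: int
  assumes r: "r > 0"
    and phol: "\<phi> holomorphic_on {z. Im z > 0} \<inter> ball 0 r" and pinj: "inj_on \<phi> ({z. Im z > 0} \<inter> ball 0 r)"
    and Bhol: "B holomorphic_on ball 0 r - {0}" and Bnz: "\<And>z. z \<in> ball 0 r - {0} \<Longrightarrow> B z \<noteq> 0"
    and Breal: "\<And>x. x \<in> ball 0 r - {0} \<Longrightarrow> x \<in> \<real> \<Longrightarrow> norm (B x) = 1"
    and ghol: "g holomorphic_on ball 0 r"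
    and g: "\<And>w. w \<in> ball 0 r \<Longrightarrow> g w \<noteq> 0 \<and> norm (deriv g w / g w) \<le> C" and C: "C \<ge> 0"
    and dphi: "\<And>z. z \<in> {z. Im z > 0} \<inter> ball 0 r \<Longrightarrow> deriv \<phi> z = B z * g z * z powi n"
  shows "\<exists>c. (B \<longlongrightarrow> c) (at 0)"
proof -
  let ?D = univalent_distortion_const
  have upper: "norm (deriv B z / B z) \<le> ?D / Im z + (?D + C * r + \<bar>of_int n\<bar>) / norm z"
    if "Im z > 0" "norm z \<le> r/2" for z
    using logderiv_bound_upper_half_disc[OF phol pinj Bhol Bnz ghol _ dphi _ C that] g by auto
  have "?D + C * r + \<bar>of_int n\<bar> \<ge> 0" "?D \<ge> 0"
    using C r unfolding univalent_distortion_const_def by simp_all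
  then obtain M where "\<And>z. z \<in> ball 0 (r/4) - {0} \<Longrightarrow> norm (B z) \<le> M"
    using bounded_of_upper_half_logderiv_bound[OF r Bhol Bnz Breal upper] by blast
  moreover have "B holomorphic_on ball 0 (r/4) - {0}"
    using Bhol by (rule holomorphic_on_subset) (use r in \<open>intro Diff_mono subset_ball, auto\<close>)
  ultimately show ?thesis using r by (intro tendsto_of_bounded_near_isolated[of B 0 "r/4" M]) auto
qed

theorem lemma3:
  fixes V :: "complex set" and h B \<phi> :: "complex \<Rightarrow> complex"
  assumes "open V" and "0 \<in> V"
    and "h meromorphic_on V"
    and "B holomorphic_on (V - {0})"
    and "\<forall>z\<in>V - {0}. B z \<noteq> 0"
    and "\<forall>z\<in>V - {0}. z \<in> \<real> \<longrightarrow> norm (B z) = 1"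
    and "\<phi> holomorphic_on {z\<in>V. Im z > 0}"
    and "inj_on \<phi> {z\<in>V. Im z > 0}"
    and "\<forall>z\<in>{z\<in>V. Im z > 0}. h analytic_on {z} \<longrightarrow> deriv \<phi> z = B z * h z"
  shows "\<exists>c. (B \<longlongrightarrow> c) (at 0)"
proof -
  have "open {z\<in>V. Im z > 0}"
    using assms(1) open_halfspace_Im_gt[of 0] by (simp add: Collect_conj_eq open_Int)
  then have nz: "\<exists>\<^sub>F w in at 0. h w \<noteq> 0"
    using assms(7-9) zero_islimpt_upper_half[OF assms(1,2)]
    by (intro frequently_nonzero_of_univalent_primitive[of \<phi>]) auto
  obtain r0 where r0: "r0 > 0" "ball 0 r0 \<subseteq> V" using assms(1,2) open_contains_ball by blast
  have "h meromorphic_on {0}" using assms(2,3) meromorphic_on_subset by blast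
  then obtain g n r C where r: "0 < r" "r \<le> r0" and C: "C \<ge> 0"
    and g: "g holomorphic_on ball 0 r" "\<And>w. w \<in> ball 0 r \<Longrightarrow> g w \<noteq> 0 \<and> norm (deriv g w / g w) \<le> C"
    and hg: "\<And>w. w \<in> ball 0 r - {0} \<Longrightarrow> h w = g w * (w - 0) powi n"
    and h_an: "h analytic_on ball 0 r - {0}"
    by (rule meromorphic_local_factorization[OF _ nz r0(1)]) blast+
  have rV: "ball 0 r \<subseteq> V" using r r0 by auto
  have dphi: "deriv \<phi> z = B z * g z * z powi n" if "z \<in> {z. Im z > 0} \<inter> ball 0 r" for z
  proof -
    have z: "z \<in> ball 0 r - {0}" "z \<in> V" "Im z > 0" using that rV by auto
    then have "h analytic_on {z}" using analytic_on_subset[OF h_an] by blast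
    then show ?thesis using assms(9) hg z by auto
  qed
  have sub: "{z. Im z > 0} \<inter> ball 0 r \<subseteq> {z\<in>V. Im z > 0}" using rV by auto
  show ?thesis
  proof (rule tendsto_at_0_of_univalent_primitive[OF r(1) _ _ _ _ _ g C dphi])
    show "\<phi> holomorphic_on {z. Im z > 0} \<inter> ball 0 r" using assms(7) sub by (rule holomorphic_on_subset)
    show "inj_on \<phi> ({z. Im z > 0} \<inter> ball 0 r)" using assms(8) sub by (rule inj_on_subset)
    show "B holomorphic_on ball 0 r - {0}" using assms(4) by (rule holomorphic_on_subset) (use rV in auto)
  qed (use assms(5,6) rV in blast)+
qed

end
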